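(* Consider the self-attention dynamics with LayerNorm, $X^{(t+1)}=D^{(t)}A^{(t)}X^{(t)}W_V^{(t)}$. Let $\mathcal{G}$ be strongly connected with radius $r$, assume \textbf{A1} and \textbf{A2}, assume that $W_V^{(t)}\in\mathbb{R}^{d\times d}$ is orthogonal for all $t\ge0$, and assume the initial input $X^{(0)}$ (with rows of unit Euclidean norm) satisfies $N\le d$ and $X^{(0)}$ has full rank $N$. Then there exist $C>0$ and $\epsilon>0$ with $N\epsilon<1$ such that $$\mu(X^{(t)})\le C\,(1-N\epsilon^{2r})^{t/(2r)}\qquad\text{for all }t\ge0,$$ i.e. all tokens converge exponentially to a common point of the unit sphere $\mathbb{S}^{d-1}$.
   Context: Tokens are the rows of $X\in\mathbb{R}^{N\times d}$. An attention mask is a directed graph $\mathcal{G}$ on $[N]$ with edge set $E(\mathcal{G})$; $(j,i)\in E(\mathcal{G})$ means token $i$ attends to token $j$; $\mathcal{N}_i=\{k:(k,i)\in E(\mathcal{G})\}$. Masked softmax: $\mathrm{softmax}_{\mathcal{G}}(R)_{ij}=\exp(R_{ij})/\sum_{k\in\mathcal{N}_i}\exp(R_{ik})$ if $(j,i)\in E(\mathcal{G})$, else $0$. $A^{(t)}=\mathrm{softmax}_{\mathcal{G}}\big(X^{(t)}W_Q^{(t)}(X^{(t)}W_K^{(t)})^\top/\sqrt{d_{QK}}\big)$ with fixed $d_{QK}>0$, $W_Q^{(t)},W_K^{(t)}\in\mathbb{R}^{d\times d'}$. LayerNorm (scaling only): $D^{(t)}=\mathrm{diag}(d_1,\dots,d_N)$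 with $d_i=1/\|(A^{(t)}X^{(t)}W_V^{(t)})_{i,:}\|_2$, so every row of $X^{(t+1)}$ has unit norm. The mask is the same for all $t$. \textbf{A1}: $(i,i)\in E(\mathcal{G})$ for all $i$. \textbf{A2}: $\sup_t\max\{\|W_Q^{(t)}\|_2,\|W_K^{(t)}\|_2\}<\infty$. $\mu(X)=\|X-\mathbf{1}\mathbf{1}^\top X/N\|_F$ with $\mathbf{1}\in\mathbb{R}^N$ the all-ones vector. $\mathcal{G}$ is strongly connected if any two distinct nodes are reachable from each other by directed paths. The radius of $\mathcal{G}$ is $\min_{c}\max_v\mathrm{dist}(c,v)$, the minimum over center nodes $c$ (nodes from which every node is reachable), where $\mathrm{dist}(u,v)$ is the length of a shortest directed path from $u$ to $v$. *)

theory Defs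
  imports "HOL-Analysis.Analysis"
begin

text \<open>Tokens are the rows of X :: real^'d^'n (N = CARD('n) tokens, d = CARD('d)).
  The mask graph is a relation E on the token index type; (j,i) \<in> E means
  token i attends to token j.\<close>

definition nbhd :: "('n \<times> 'n) set \<Rightarrow> 'n \<Rightarrow> 'n set" where
  "nbhd E i = {k. (k, i) \<in> E}"

definition masked_softmax :: "('n::finite \<times> 'n) set \<Rightarrow> real^'n^'n \<Rightarrow> real^'n^'n" where
  "masked_softmax E R = (\<chi> i j. if (j, i) \<in> E
      then exp (R $ i $ j) / (\<Sum>k\<in>nbhd E i. exp (R $ i $ k)) else 0)"

definition attn :: "('n::finite \<times> 'n) set \<Rightarrow> real \<Rightarrow> real^'p^'d \<Rightarrow> real^'p^'d
      \<Rightarrow> real^'d^'n \<Rightarrow> real^'n^'n" where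
  "attn E dQK WQ WK X =
     masked_softmax E ((1 / sqrt dQK) *\<^sub>R ((X ** WQ) ** transpose (X ** WK)))"

definition layernorm :: "real^'d^'n \<Rightarrow> real^'d^'n" where
  "layernorm Y = (\<chi> i. (1 / norm (Y $ i)) *\<^sub>R (Y $ i))"

definition sa_step :: "('n::finite \<times> 'n) set \<Rightarrow> real \<Rightarrow> real^'p^'d \<Rightarrow> real^'p^'d
      \<Rightarrow> real^'d^'d \<Rightarrow> real^'d^'n \<Rightarrow> real^'d^'n" where
  "sa_step E dQK WQ WK WV X = layernorm ((attn E dQK WQ WK X ** X) ** WV)"

definition spec_norm :: "real^'p^'d \<Rightarrow> real" where
  "spec_norm M = onorm (\<lambda>v. M *v v)"

text \<open>mu(X) = Frobenius norm of X - 1 1^T X / N (the norm on real^'d^'n is the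
  Frobenius norm).\<close>
definition mu :: "real^'d^'n::finite \<Rightarrow> real" where
  "mu X = norm (\<chi> i. X $ i - (1 / real CARD('n)) *\<^sub>R (\<Sum>k\<in>UNIV. X $ k))"

definition strongly_connected :: "('n \<times> 'n) set \<Rightarrow> bool" where
  "strongly_connected E \<longleftrightarrow> (\<forall>u v. u \<noteq> v \<longrightarrow> (u, v) \<in> E\<^sup>+ \<and> (v, u) \<in> E\<^sup>+)"

definition gdist :: "('n \<times> 'n) set \<Rightarrow> 'n \<Rightarrow> 'n \<Rightarrow> nat" where
  "gdist E u v = (LEAST k. (u, v) \<in> E ^^ k)"

definition is_center :: "('n \<times> 'n) set \<Rightarrow> 'n \<Rightarrow> bool" where
  "is_center E c \<longleftrightarrow> (\<forall>v. (c, v) \<in> E\<^sup>*)"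

definition graph_radius :: "('n::finite \<times> 'n) set \<Rightarrow> nat" where
  "graph_radius E = Min {Max (range (gdist E c)) | c. is_center E c}"

end

theory Submission
  imports Defs
begin

text \<open>Write X t = Q t X0 V t, where V t is the product of the orthogonal value matrices and the
  nonnegative matrix Q t collects the attention and LayerNorm factors. As the rows of X t and X0 are
  unit vectors, the row sums of Q t are at least 1, and full rank of X0 bounds them above by some S.
  The rows of Q t normalised to probability vectors P t evolve by row-stochastic matrices whose
  entries on mask edges are at least \<alpha> = exp (-2 B^2 / sqrt dQK) / (N S), uniformly in t because A2
  bounds all attention scores. So every column of P t is a consensus iteration on the mask graph:
  a center reaches every token in r steps, hence the spread of the column shrinks by the factor
  1 - \<alpha>^r every r steps. Distances between rows of X t are at most 2 S N times that spread,
  which gives the exponential decay of \<mu>; the stated rate is a weakening of (1 - \<alpha>^r) ^ (t / r).\<close>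

lemma row_matrix_matrix_mult: "((M::real^'m^'n) ** (N::real^'k^'m)) $ i = M $ i v* N"
  by (simp add: matrix_matrix_mult_def vector_matrix_mult_def vec_eq_iff mult.commute)

lemma vector_matrix_mult_eq_sum_rows: "(p::real^'n) v* (Y::real^'d^'n) = (\<Sum>k\<in>UNIV. p $ k *\<^sub>R Y $ k)"
  by (simp add: vector_matrix_mult_def vec_eq_iff sum_component mult.commute)

lemma linear_vector_matrix_mult: "linear (\<lambda>p. (p::real^'n) v* (Y::real^'d^'n))"
proof -
  have "(\<lambda>p. p v* Y) = (*v) (transpose Y)"
    by (rule ext) simp
  then show ?thesis
    by (metis matrix_vector_mul_linear)
qed

lemma column_matrix_mult: "column k ((M::real^'m^'n) ** N) = M *v column k N"
  by (simp add: column_def matrix_matrix_mult_def matrix_vector_mult_def vec_eq_iff)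

lemma norm_vector_matrix_mult_orthogonal:
  assumes "orthogonal_matrix (U::real^'d^'d)"
  shows "norm (v v* U) = norm v"
proof -
  have "(v v* U) \<bullet> (v v* U) = v \<bullet> ((U ** transpose U) *v v)"
    by (metis dot_lmul_matrix matrix_vector_mul_assoc transpose_matrix_vector)
  also have "\<dots> = v \<bullet> v"
    using assms by (simp add: orthogonal_matrix_def)
  finally show ?thesis
    by (simp add: norm_eq_sqrt_inner)
qed

lemma spec_norm_nonneg: "0 \<le> spec_norm (M::real^'p^'d)"
  unfolding spec_norm_def by (rule onorm_pos_le[OF matrix_vector_mul_bounded_linear])

lemma norm_vector_matrix_mult_le_spec_norm: "norm (u v* (M::real^'p^'d)) \<le> spec_norm M * norm u"
proof -
  have "norm (u v* M) ^ 2 = u \<bullet> (M *v (u v* M))"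
    by (simp add: power2_norm_eq_inner dot_lmul_matrix)
  also have "\<dots> \<le> norm u * norm (M *v (u v* M))"
    by (rule norm_cauchy_schwarz)
  also have "\<dots> \<le> norm u * (spec_norm M * norm (u v* M))"
    unfolding spec_norm_def
    by (intro mult_left_mono onorm[OF matrix_vector_mul_bounded_linear]) simp
  finally have "norm (u v* M) * norm (u v* M) \<le> (spec_norm M * norm u) * norm (u v* M)"
    by (simp add: power2_eq_square mult_ac)
  then show ?thesis
    using spec_norm_nonneg[of M] by (cases "norm (u v* M) = 0") auto
qed

lemma norm_vector_matrix_mult_le_sum_abs:
  assumes "\<And>k. norm ((Y::real^'d^'n) $ k) = 1"
  shows "norm (p v* Y) \<le> (\<Sum>k\<in>UNIV. \<bar>p $ k\<bar>)"
proof -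
  have "norm (p v* Y) \<le> (\<Sum>k\<in>UNIV. norm (p $ k *\<^sub>R Y $ k))"
    unfolding vector_matrix_mult_eq_sum_rows by (rule norm_sum)
  then show ?thesis
    using assms by simp
qed

lemma sum_ge_one_if_unit_combination_of_unit_rows:
  assumes "\<And>k. 0 \<le> p $ k" and "\<And>k. norm ((Y::real^'d^'n) $ k) = 1" and "norm (p v* Y) = 1"
  shows "1 \<le> (\<Sum>k\<in>UNIV. p $ k)"
  using norm_vector_matrix_mult_le_sum_abs[of Y p] assms by simp

lemma sum_le_if_bounded_below:
  assumes "\<And>p. a * norm p \<le> norm (p v* (Y::real^'d^'n))" and "norm (p v* Y) = 1" and "a > 0"
  shows "(\<Sum>k\<in>UNIV. p $ k) \<le> real CARD('n) / a"
proof -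
  have "(\<Sum>k\<in>UNIV. p $ k) \<le> (\<Sum>k\<in>(UNIV::'n set). norm p)"
    by (intro sum_mono) (metis abs_ge_self component_le_norm_cart order_trans)
  also have "\<dots> \<le> real CARD('n) / a"
    using assms(1)[of p] assms(2,3) by (simp add: field_simps)
  finally show ?thesis .
qed

lemma inj_vector_matrix_mult_if_full_rank:
  fixes Y :: "real^'d::finite^'n::finite"
  assumes "rank Y = CARD('n)"
  shows "inj (\<lambda>p. p v* Y)"
proof -
  have "rank (transpose Y) = CARD('n)"
    using assms by (simp add: rank_transpose)
  then have "inj ((*v) (transpose Y))"
    by (simp add: full_rank_injective)
  moreover have "(*v) (transpose Y) = (\<lambda>p. p v* Y)"
    by (rule ext) simp
  ultimately show ?thesis
    by simp
qed

lemma norm_diff_le_if_unit_multiples: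
  fixes u v :: "'a::real_normed_vector"
  assumes "norm x = 1" "norm y = 1" "x = s *\<^sub>R u" "y = s' *\<^sub>R v" "s > 0" "s' > 0"
  shows "norm (x - y) \<le> 2 * s * norm (u - v)"
proof -
  have "x - y = s *\<^sub>R (u - v) + (s - s') *\<^sub>R v"
    using assms by (simp add: algebra_simps)
  then have "norm (x - y) \<le> norm (s *\<^sub>R (u - v)) + norm ((s - s') *\<^sub>R v)"
    by (metis norm_triangle_ineq)
  also have "norm ((s - s') *\<^sub>R v) = \<bar>s * norm v - s' * norm v\<bar>"
    by (simp add: abs_mult flip: left_diff_distrib)
  \<comment> \<open>s' * norm v = 1 = s * norm u\<close>
  also have "s * norm v - s' * norm v = s * (norm v - norm u)"
    using assms by (simp add: right_diff_distrib)
  also have "\<bar>s * (norm v - norm u)\<bar> \<le> s * norm (u - v)"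
    using assms(5) norm_triangle_ineq3[of v u] by (simp add: abs_mult norm_minus_commute)
  finally show ?thesis
    using assms(5) by simp
qed

lemma layernorm_nth: "layernorm Y $ i = (1 / norm (Y $ i)) *\<^sub>R Y $ i"
  by (simp add: layernorm_def)

lemma mu_le_if_row_dist_le:
  fixes X :: "real^'d^'n::finite"
  assumes "\<And>i j. norm (X $ i - X $ j) \<le> D"
  shows "mu X \<le> real CARD('n) * D"
proof -
  have row: "norm (X $ i - (1 / real CARD('n)) *\<^sub>R (\<Sum>k\<in>UNIV. X $ k)) \<le> D" for i
  proof -
    have "(\<Sum>k\<in>UNIV. X $ i - X $ k) = real CARD('n) *\<^sub>R X $ i - (\<Sum>k\<in>UNIV. X $ k)"
      by (simp only: sum_subtractf sum_constant_scaleR card_UNIV)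
    then have "X $ i - (1 / real CARD('n)) *\<^sub>R (\<Sum>k\<in>UNIV. X $ k)
        = (1 / real CARD('n)) *\<^sub>R (\<Sum>k\<in>UNIV. X $ i - X $ k)"
      by (simp add: scaleR_right_diff_distrib)
    then have "norm (X $ i - (1 / real CARD('n)) *\<^sub>R (\<Sum>k\<in>UNIV. X $ k))
        \<le> (1 / real CARD('n)) * (\<Sum>k\<in>UNIV. norm (X $ i - X $ k))"
      by (simp add: norm_sum divide_right_mono)
    also have "\<dots> \<le> (1 / real CARD('n)) * (\<Sum>k\<in>(UNIV::'n set). D)"
      by (intro mult_left_mono sum_mono assms) simp
    finally show ?thesis
      by simp
  qed
  have "mu X \<le> (\<Sum>i\<in>UNIV. norm (X $ i - (1 / real CARD('n)) *\<^sub>R (\<Sum>k\<in>UNIV. X $ k)))"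
    unfolding mu_def norm_vec_def by (rule order_trans[OF L2_set_le_sum]) auto
  also have "\<dots> \<le> (\<Sum>i\<in>(UNIV::'n set). D)"
    by (intro sum_mono row)
  finally show ?thesis
    by simp
qed

lemma mu_card_one:
  assumes "CARD('n) = 1"
  shows "mu (X::real^'d^'n::finite) = 0"
proof -
  have "X $ i = X $ j" for i j
    using assms by (metis card_1_singletonE singletonD UNIV_I)
  then have "mu X \<le> real CARD('n) * 0"
    by (intro mu_le_if_row_dist_le) simp
  moreover have "0 \<le> mu X"
    by (simp add: mu_def)
  ultimately show ?thesis
    by simp
qed

section \<open>Masked softmax attention\<close>

definition row_stochastic :: "real^'n^'n \<Rightarrow> bool" where
  "row_stochastic A \<longleftrightarrow> (\<forall>i j. 0 \<le> A $ i $ j) \<and> (\<forall>i. (\<Sum>j\<in>UNIV. A $ i $ j) = 1)"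

lemma masked_softmax_row_stochastic:
  fixes R :: "real^'n::finite^'n"
  assumes "\<And>i. (i, i) \<in> E"
  shows "row_stochastic (masked_softmax E R)"
  unfolding row_stochastic_def
proof (intro conjI allI)
  fix i j
  have "0 < (\<Sum>k\<in>nbhd E i. exp (R $ i $ k))"
    using assms by (intro sum_pos2[of _ i]) (auto simp: nbhd_def)
  then show "0 \<le> masked_softmax E R $ i $ j"
    by (simp add: masked_softmax_def)
  show "(\<Sum>j\<in>UNIV. masked_softmax E R $ i $ j) = 1"
    using \<open>0 < (\<Sum>k\<in>nbhd E i. exp (R $ i $ k))\<close>
    by (simp add: masked_softmax_def sum.If_cases nbhd_def Collect_conv_if
        flip: sum_divide_distrib)
qed

lemma masked_softmax_ge:
  fixes R :: "real^'n::finite^'n"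
  assumes "\<And>i. (i, i) \<in> E" and "\<And>i j. \<bar>R $ i $ j\<bar> \<le> M" and "(j, i) \<in> E"
  shows "exp (- 2 * M) / real CARD('n) \<le> masked_softmax E R $ i $ j"
proof -
  define den where "den = (\<Sum>k\<in>nbhd E i. exp (R $ i $ k))"
  have "0 < den"
    unfolding den_def using assms(1) by (intro sum_pos2[of _ i]) (auto simp: nbhd_def)
  have "den \<le> (\<Sum>k\<in>nbhd E i. exp M)"
    unfolding den_def using assms(2) by (intro sum_mono) (auto simp: abs_le_iff)
  also have "\<dots> \<le> real CARD('n) * exp M"
    by (simp add: card_mono)
  finally have "exp (- M) / (real CARD('n) * exp M) \<le> exp (R $ i $ j) / den"
    using \<open>0 < den\<close> assms(2)[of i j] by (intro frac_le) (auto simp: abs_le_iff)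
  moreover have "exp (- 2 * M) / real CARD('n) = exp (- M) / (real CARD('n) * exp M)"
    by (simp add: exp_minus mult_exp_exp field_simps)
  ultimately show ?thesis
    using assms(3) by (simp add: masked_softmax_def den_def)
qed

lemma attention_score_bound:
  fixes X :: "real^'d::finite^'n::finite" and WQ WK :: "real^'p::finite^'d"
  assumes "\<And>i. norm (X $ i) = 1" and "spec_norm WQ \<le> B" and "spec_norm WK \<le> B"
  shows "\<bar>((X ** WQ) ** transpose (X ** WK)) $ i $ j\<bar> \<le> B * B"
proof -
  have "((X ** WQ) ** transpose (X ** WK)) $ i $ j = (X ** WQ) $ i \<bullet> (X ** WK) $ j"
    by (simp add: matrix_matrix_mult_def transpose_def inner_vec_def)
  also have "\<dots> = (X $ i v* WQ) \<bullet> (X $ j v* WK)"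
    by (simp only: row_matrix_matrix_mult)
  finally have "((X ** WQ) ** transpose (X ** WK)) $ i $ j = (X $ i v* WQ) \<bullet> (X $ j v* WK)" .
  moreover have "\<bar>(X $ i v* WQ) \<bullet> (X $ j v* WK)\<bar> \<le> norm (X $ i v* WQ) * norm (X $ j v* WK)"
    by (rule Cauchy_Schwarz_ineq2)
  moreover have "norm (X $ i v* WQ) * norm (X $ j v* WK) \<le> B * B"
    using norm_vector_matrix_mult_le_spec_norm[of "X $ i" WQ]
      norm_vector_matrix_mult_le_spec_norm[of "X $ j" WK] assms spec_norm_nonneg[of WQ]
    by (intro mult_mono) auto
  ultimately show ?thesis
    by linarith
qed

lemma attn_row_stochastic:
  assumes "\<And>i. (i, i) \<in> E"
  shows "row_stochastic (attn E dQK WQ WK X)"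
  unfolding attn_def using assms by (rule masked_softmax_row_stochastic)

lemma attn_ge:
  fixes X :: "real^'d::finite^'n::finite" and WQ WK :: "real^'p::finite^'d"
  assumes "\<And>i. (i, i) \<in> E" and "(j, i) \<in> E" and "dQK > 0"
    and "\<And>i. norm (X $ i) = 1" and "spec_norm WQ \<le> B" and "spec_norm WK \<le> B"
  shows "exp (- 2 * (B * B / sqrt dQK)) / real CARD('n) \<le> attn E dQK WQ WK X $ i $ j"
  unfolding attn_def
proof (rule masked_softmax_ge[OF assms(1) _ assms(2)])
  fix i j
  show "\<bar>((1 / sqrt dQK) *\<^sub>R ((X ** WQ) ** transpose (X ** WK))) $ i $ j\<bar> \<le> B * B / sqrt dQK"
    using attention_score_bound[OF assms(4-6), of i j] \<open>dQK > 0\<close>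
    by (simp add: abs_mult divide_right_mono)
qed

section \<open>Consensus iterations\<close>

definition spread :: "real^'n::finite \<Rightarrow> real" where
  "spread v = Max (range (($) v)) - Min (range (($) v))"

lemma abs_diff_le_spread: "\<bar>v $ i - v $ j\<bar> \<le> spread v"
proof -
  have "v $ i \<le> Max (range (($) v))" "v $ j \<le> Max (range (($) v))"
    "Min (range (($) v)) \<le> v $ i" "Min (range (($) v)) \<le> v $ j"
    by auto
  then show ?thesis
    unfolding spread_def by linarith
qed

lemma spread_eq_diff:
  obtains i j where "spread v = v $ i - v $ j"
proof -
  have "Max (range (($) v)) \<in> range (($) v)" "Min (range (($) v)) \<in> range (($) v)"
    by (intro Max_in Min_in; simp)+
  then obtain i j where "Max (range (($) v)) = v $ i" "Min (range (($) v)) = v $ j"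
    by blast
  then show ?thesis
    by (intro that) (simp add: spread_def)
qed

lemma row_stochastic_mult_le:
  assumes "row_stochastic W" and "\<And>j. v $ j \<le> M"
  shows "(W *v v) $ i \<le> M"
proof -
  have "(W *v v) $ i = (\<Sum>j\<in>UNIV. W $ i $ j * v $ j)"
    by (simp add: matrix_vector_mult_def)
  also have "\<dots> \<le> (\<Sum>j\<in>UNIV. W $ i $ j * M)"
    using assms by (intro sum_mono mult_left_mono) (auto simp: row_stochastic_def)
  also have "\<dots> = M"
    using assms(1) by (simp add: row_stochastic_def flip: sum_distrib_right)
  finally show ?thesis .
qed

lemma row_stochastic_mult_ge:
  assumes "row_stochastic W" and "\<And>j. m \<le> v $ j"
  shows "m \<le> (W *v v) $ i"
  using row_stochastic_mult_le[OF assms(1), of "- v" "- m" i] assms(2)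
  by (simp add: matrix_vector_mult_def sum_negf)

lemma spread_row_stochastic_mult_le:
  assumes "row_stochastic W"
  shows "spread (W *v v) \<le> spread v"
proof -
  obtain i j where "spread (W *v v) = (W *v v) $ i - (W *v v) $ j"
    by (rule spread_eq_diff)
  moreover have "(W *v v) $ i \<le> Max (range (($) v))"
    using assms by (rule row_stochastic_mult_le) simp
  moreover have "Min (range (($) v)) \<le> (W *v v) $ j"
    using assms by (rule row_stochastic_mult_ge) simp
  ultimately show ?thesis
    unfolding spread_def by linarith
qed

locale averaging_process =
  fixes f :: "nat \<Rightarrow> real^'n::finite" and W :: "nat \<Rightarrow> real^'n^'n"
    and E :: "('n \<times> 'n) set" and \<alpha> :: real
  assumes stochastic: "\<And>t. row_stochastic (W t)"
    and edge_weight_ge: "\<And>t i j. (j, i) \<in> E \<Longrightarrow> \<alpha> \<le> W t $ i $ j"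
    and weight_nonneg: "0 \<le> \<alpha>"
    and iterate: "\<And>t. f (Suc t) = W t *v f t"
begin

lemma W_nonneg: "0 \<le> W t $ i $ j"
  using stochastic by (simp add: row_stochastic_def)

lemma le_bound_persists:
  assumes "\<And>j. f t $ j \<le> M"
  shows "f (t + s) $ i \<le> M"
  using assms by (induction s arbitrary: i) (auto simp: iterate intro: row_stochastic_mult_le[OF stochastic])

lemma le_bound_improves_along_path:
  assumes bound: "\<And>j. f t $ j \<le> M" and path: "(c, i) \<in> E ^^ s"
  shows "f (t + s) $ i \<le> M - \<alpha> ^ s * (M - f t $ c)"
  using path
proof (induction s arbitrary: i)
  case 0
  then show ?case by simp
next
  case (Suc s)
  then obtain j where "(c, j) \<in> E ^^ s" and "(j, i) \<in> E"
    by auto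
  \<comment> \<open>the weight on the edge (j, i) carries the gap below M at j over to i\<close>
  have "\<alpha> * (\<alpha> ^ s * (M - f t $ c)) \<le> W (t + s) $ i $ j * (M - f (t + s) $ j)"
    using Suc.IH[OF \<open>(c, j) \<in> E ^^ s\<close>] bound[of c] weight_nonneg W_nonneg edge_weight_ge[OF \<open>(j, i) \<in> E\<close>]
    by (intro mult_mono) auto
  also have "\<dots> \<le> (\<Sum>l\<in>UNIV. W (t + s) $ i $ l * (M - f (t + s) $ l))"
    using le_bound_persists[OF bound] W_nonneg by (intro member_le_sum) auto
  also have "\<dots> = M - f (t + Suc s) $ i"
    using stochastic[of "t + s"]
    by (simp add: iterate matrix_vector_mult_def row_stochastic_def right_diff_distrib
        sum_subtractf flip: sum_distrib_right)
  finally show ?case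
    by simp
qed

lemma spread_contract:
  assumes "\<And>i. (c, i) \<in> E ^^ L"
  shows "spread (f (t + L)) \<le> (1 - \<alpha> ^ L) * spread (f t)"
proof -
  interpret neg: averaging_process "\<lambda>t. - f t" W E \<alpha>
    using stochastic edge_weight_ge weight_nonneg
    by unfold_locales (auto simp: iterate matrix_vector_mult_def vec_eq_iff sum_negf)
  define M where "M = Max (range (($) (f t)))"
  define m where "m = Min (range (($) (f t)))"
  obtain i j where "spread (f (t + L)) = f (t + L) $ i - f (t + L) $ j"
    by (rule spread_eq_diff)
  moreover have "f (t + L) $ i \<le> M - \<alpha> ^ L * (M - f t $ c)"
    by (rule le_bound_improves_along_path[OF _ assms]) (simp add: M_def)
  moreover have "m + \<alpha> ^ L * (f t $ c - m) \<le> f (t + L) $ j"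
  proof -
    have "(- f t) $ k \<le> - m" for k
      by (simp add: m_def)
    from neg.le_bound_improves_along_path[OF this assms] show ?thesis
      by (simp add: algebra_simps)
  qed
  ultimately show ?thesis
    unfolding spread_def M_def m_def by (simp add: algebra_simps)
qed

lemma spread_decay:
  assumes "\<And>i. (c, i) \<in> E ^^ L" and "0 < L" and "\<alpha> \<le> 1"
  shows "spread (f t) \<le> (1 - \<alpha> ^ L) ^ (t div L) * spread (f 0)"
proof -
  have "\<alpha> ^ L \<le> 1"
    using assms(3) weight_nonneg by (simp add: power_le_one)
  have multiple: "spread (f (n * L)) \<le> (1 - \<alpha> ^ L) ^ n * spread (f 0)" for n
  proof (induction n)
    case (Suc n)
    have "spread (f (Suc n * L)) \<le> (1 - \<alpha> ^ L) * spread (f (n * L))"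
      using spread_contract[OF assms(1), of "n * L"] by (simp add: add.commute)
    also have "\<dots> \<le> (1 - \<alpha> ^ L) * ((1 - \<alpha> ^ L) ^ n * spread (f 0))"
      using Suc \<open>\<alpha> ^ L \<le> 1\<close> by (intro mult_left_mono) auto
    finally show ?case
      by simp
  qed simp
  have mono: "spread (f (s + k)) \<le> spread (f s)" for s k
    by (induction k) (auto simp: iterate intro: order_trans[OF spread_row_stochastic_mult_le[OF stochastic]])
  have "spread (f t) \<le> spread (f (t div L * L))"
    using mono[of "t div L * L" "t mod L"] by simp
  also have "\<dots> \<le> (1 - \<alpha> ^ L) ^ (t div L) * spread (f 0)"
    by (rule multiple)
  finally show ?thesis .
qed

end

section \<open>Centers of the mask graph\<close>

lemma relpow_mono_refl:
  assumes "\<And>i. (i, i) \<in> E" and "(c, v) \<in> E ^^ k" and "k \<le> n"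
  shows "(c, v) \<in> E ^^ n"
proof -
  have "(c, v) \<in> E ^^ (k + m)" for m
    using assms(1,2) by (induction m) auto
  then show ?thesis
    using assms(3) by (metis le_add_diff_inverse)
qed

lemma strongly_connected_center:
  fixes E :: "('n::finite \<times> 'n) set"
  assumes "strongly_connected E" and "\<And>i. (i, i) \<in> E"
  obtains c where "\<And>v. (c, v) \<in> E ^^ graph_radius E"
proof -
  have center: "is_center E c" for c
    using assms(1) unfolding is_center_def strongly_connected_def
    by (metis rtrancl.rtrancl_refl trancl_into_rtrancl)
  have centers: "{Max (range (gdist E c)) | c. is_center E c} = range (\<lambda>c. Max (range (gdist E c)))"
    using center by blast
  have "graph_radius E \<in> range (\<lambda>c. Max (range (gdist E c)))"
    unfolding graph_radius_def centers by (rule Min_in) auto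
  then obtain c where radius: "graph_radius E = Max (range (gdist E c))"
    by auto
  have "(c, v) \<in> E ^^ gdist E c v" for v
  proof -
    obtain k where "(c, v) \<in> E ^^ k"
      using center[of c] rtrancl_power unfolding is_center_def by blast
    then show ?thesis
      unfolding gdist_def by (rule LeastI)
  qed
  moreover have "gdist E c v \<le> graph_radius E" for v
    unfolding radius by (rule Max_ge) auto
  ultimately show ?thesis
    using that relpow_mono_refl[OF assms(2)] by blast
qed

lemma graph_radius_ge_one:
  fixes E :: "('n::finite \<times> 'n) set"
  assumes "strongly_connected E" and "\<And>i. (i, i) \<in> E" and "2 \<le> CARD('n)"
  shows "1 \<le> graph_radius E"
proof (rule ccontr)
  assume "\<not> 1 \<le> graph_radius E"
  then have "graph_radius E = 0"
    by simp
  obtain c where reach: "\<And>v. (c, v) \<in> E ^^ graph_radius E"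
    using strongly_connected_center[OF assms(1,2)] by blast
  have "v = c" for v
    using reach[of v] \<open>graph_radius E = 0\<close> by simp
  then have "UNIV = {c}"
    by auto
  then have "CARD('n) = 1"
    by (auto simp: card_1_singleton_iff)
  then show False
    using assms(3) by simp
qed

section \<open>LayerNorm dynamics driven by stochastic matrices\<close>

locale layernorm_flow =
  fixes A :: "nat \<Rightarrow> real^'n::finite^'n" and W :: "nat \<Rightarrow> real^'d::finite^'d"
    and X :: "nat \<Rightarrow> real^'d^'n"
  assumes stochastic: "\<And>t. row_stochastic (A t)"
    and orthogonal: "\<And>t. orthogonal_matrix (W t)"
    and step: "\<And>t. X (Suc t) = layernorm ((A t ** X t) ** W t)"
    and unit_rows_0: "\<And>i. norm (X 0 $ i) = 1"
    and injective_0: "inj (\<lambda>p. p v* X 0)"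
begin

primrec V :: "nat \<Rightarrow> real^'d^'d" where
  "V 0 = mat 1"
| "V (Suc t) = V t ** W t"

primrec Q :: "nat \<Rightarrow> real^'n^'n" where
  "Q 0 = mat 1"
| "Q (Suc t) = (\<chi> i. (1 / norm (((A t ** X t) ** W t) $ i)) *\<^sub>R (A t ** Q t) $ i)"

definition rowsum :: "nat \<Rightarrow> real^'n" where
  "rowsum t = Q t *v 1"

lemma rowsum_nth: "rowsum t $ i = (\<Sum>k\<in>UNIV. Q t $ i $ k)"
  by (simp add: rowsum_def matrix_vector_mult_def)

lemma V_orthogonal: "orthogonal_matrix (V t)"
  by (induction t) (simp_all add: orthogonal_matrix_id orthogonal_matrix_mul orthogonal)

lemma A_nonneg: "0 \<le> A t $ i $ j"
  using stochastic by (simp add: row_stochastic_def)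

lemma Q_nonneg: "0 \<le> Q t $ i $ j"
proof (induction t arbitrary: i j)
  case 0
  then show ?case by (simp add: mat_def)
next
  case (Suc t)
  then show ?case
    by (simp add: matrix_matrix_mult_def A_nonneg sum_nonneg)
qed

lemma rowsum_ge_one_if_representation:
  assumes "X t = (Q t ** X 0) ** V t" and "\<And>i. norm (X t $ i) = 1"
  shows "1 \<le> rowsum t $ i"
proof -
  have "norm (Q t $ i v* X 0) = 1"
    using assms norm_vector_matrix_mult_orthogonal[OF V_orthogonal]
    by (simp add: row_matrix_matrix_mult)
  then show ?thesis
    unfolding rowsum_nth using Q_nonneg unit_rows_0
    by (intro sum_ge_one_if_unit_combination_of_unit_rows)
qed

lemma representation_step:
  assumes "X t = (Q t ** X 0) ** V t" and "\<And>i. norm (X t $ i) = 1"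
  shows "0 < norm (((A t ** X t) ** W t) $ i)"
    and "X (Suc t) = (Q (Suc t) ** X 0) ** V (Suc t)"
    and "norm (X (Suc t) $ i) = 1"
proof -
  have Y: "((A t ** X t) ** W t) $ i = (A t ** Q t) $ i v* X 0 v* V (Suc t)" for i
    by (simp add: assms(1) matrix_mul_assoc row_matrix_matrix_mult vector_matrix_mul_assoc)
  \<comment> \<open>the new coefficients have row sums at least 1, hence are nonzero\<close>
  have "1 \<le> (A t *v rowsum t) $ i"
    using rowsum_ge_one_if_representation[OF assms] by (intro row_stochastic_mult_ge stochastic)
  also have "(A t *v rowsum t) $ i = ((A t ** Q t) *v 1) $ i"
    by (simp add: rowsum_def matrix_vector_mul_assoc)
  finally have "(A t ** Q t) $ i \<noteq> 0"
    by (auto simp: matrix_vector_mult_def)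
  then have "(A t ** Q t) $ i v* X 0 \<noteq> 0"
    using injective_0 by (metis injD vector_matrix_mult_0)
  then show pos: "0 < norm (((A t ** X t) ** W t) $ i)"
    unfolding Y norm_vector_matrix_mult_orthogonal[OF V_orthogonal] by simp
  have "X (Suc t) $ i = ((Q (Suc t) ** X 0) ** V (Suc t)) $ i" for i
  proof -
    have "X (Suc t) $ i
        = (1 / norm (((A t ** X t) ** W t) $ i)) *\<^sub>R ((A t ** Q t) $ i v* X 0 v* V (Suc t))"
      by (simp only: step layernorm_nth Y)
    then show ?thesis
      by (simp add: row_matrix_matrix_mult scaleR_vector_matrix_assoc)
  qed
  then show "X (Suc t) = (Q (Suc t) ** X 0) ** V (Suc t)"
    by (simp add: vec_eq_iff)
  show "norm (X (Suc t) $ i) = 1"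
    using pos by (simp add: step layernorm_nth)
qed

lemma representation: "X t = (Q t ** X 0) ** V t \<and> (\<forall>i. norm (X t $ i) = 1)"
proof (induction t)
  case 0
  then show ?case by (simp add: unit_rows_0)
next
  case (Suc t)
  then show ?case using representation_step by blast
qed

lemma unit_rows: "norm (X t $ i) = 1"
  using representation by blast

lemma rowsum_ge_one: "1 \<le> rowsum t $ i"
  using representation by (blast intro: rowsum_ge_one_if_representation)

lemma norm_Q_row: "norm (Q t $ i v* X 0) = 1"
  using representation[of t] unit_rows[of t i]
    norm_vector_matrix_mult_orthogonal[OF V_orthogonal]
  by (simp add: row_matrix_matrix_mult)

lemma rowsum_bounded:
  obtains S where "\<And>t i. rowsum t $ i \<le> S"
proof -
  obtain a where "a > 0" and "\<And>p. a * norm p \<le> norm (p v* X 0)"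
    using linear_inj_bounded_below_pos[OF linear_vector_matrix_mult injective_0] by blast
  then show ?thesis
    using that sum_le_if_bounded_below norm_Q_row unfolding rowsum_nth by blast
qed

definition P :: "nat \<Rightarrow> real^'n^'n" where
  "P t = (\<chi> i. (1 / rowsum t $ i) *\<^sub>R Q t $ i)"

definition avg_weights :: "nat \<Rightarrow> real^'n^'n" where
  "avg_weights t = (\<chi> i j. A t $ i $ j * rowsum t $ j / (A t *v rowsum t) $ i)"

lemma A_rowsum_ge_one: "1 \<le> (A t *v rowsum t) $ i"
  using rowsum_ge_one by (intro row_stochastic_mult_ge stochastic)

lemma rowsum_Suc:
  "rowsum (Suc t) $ i = (A t *v rowsum t) $ i / norm (((A t ** X t) ** W t) $ i)"
proof -
  have "(A t *v rowsum t) $ i = (\<Sum>j\<in>UNIV. \<Sum>k\<in>UNIV. A t $ i $ j * Q t $ j $ k)"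
    by (simp add: rowsum_nth matrix_vector_mult_def sum_distrib_left)
  also have "\<dots> = (\<Sum>k\<in>UNIV. \<Sum>j\<in>UNIV. A t $ i $ j * Q t $ j $ k)"
    by (rule sum.swap)
  also have "\<dots> = (\<Sum>k\<in>UNIV. (A t ** Q t) $ i $ k)"
    by (simp add: matrix_matrix_mult_def)
  finally show ?thesis
    by (simp add: rowsum_nth sum_divide_distrib)
qed

lemma P_Suc: "P (Suc t) = avg_weights t ** P t"
proof -
  have "P (Suc t) $ i $ k = (avg_weights t ** P t) $ i $ k" for i k
  proof -
    have "0 < norm (((A t ** X t) ** W t) $ i)"
      using representation representation_step(1) by blast
    moreover have "rowsum t $ j \<noteq> 0" for j
      using rowsum_ge_one[of t j] by simp
    ultimately show ?thesis
      using A_rowsum_ge_one[of t i]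
      by (simp add: P_def avg_weights_def rowsum_Suc matrix_matrix_mult_def sum_divide_distrib)
  qed
  then show ?thesis
    by (simp add: vec_eq_iff)
qed

lemma avg_weights_row_stochastic: "row_stochastic (avg_weights t)"
  unfolding row_stochastic_def
proof (intro conjI allI)
  fix i j
  show "0 \<le> avg_weights t $ i $ j"
    using A_nonneg rowsum_ge_one[of t j] A_rowsum_ge_one[of t i] by (simp add: avg_weights_def)
  show "(\<Sum>j\<in>UNIV. avg_weights t $ i $ j) = 1"
    using A_rowsum_ge_one[of t i]
    by (simp add: avg_weights_def matrix_vector_mult_def flip: sum_divide_distrib)
qed

lemma avg_weights_ge:
  assumes "\<alpha>0 \<le> A t $ i $ j" and "\<And>j. rowsum t $ j \<le> S"
  shows "\<alpha>0 / S \<le> avg_weights t $ i $ j"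
proof -
  have "\<alpha>0 \<le> A t $ i $ j * rowsum t $ j"
    using assms(1) A_nonneg[of t i j] rowsum_ge_one[of t j] by (metis mult_left_mono mult.right_neutral order_trans)
  moreover have "(A t *v rowsum t) $ i \<le> S"
    using assms(2) by (intro row_stochastic_mult_le stochastic)
  ultimately show ?thesis
    unfolding avg_weights_def using A_nonneg[of t i j] rowsum_ge_one[of t j] A_rowsum_ge_one[of t i]
    by (simp add: frac_le)
qed

lemma P_bounds: "0 \<le> P t $ i $ k \<and> P t $ i $ k \<le> 1"
proof -
  have "Q t $ i $ k \<le> rowsum t $ i"
    unfolding rowsum_nth using Q_nonneg by (intro member_le_sum) auto
  then show ?thesis
    using rowsum_ge_one[of t i] Q_nonneg[of t i k] by (simp add: P_def)
qed

lemma row_diff_le: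
  assumes "\<And>i. rowsum t $ i \<le> S"
  shows "norm (X t $ i - X t $ j) \<le> 2 * S * (\<Sum>k\<in>UNIV. \<bar>P t $ i $ k - P t $ j $ k\<bar>)"
proof -
  have scaled: "Q t $ l v* X 0 = rowsum t $ l *\<^sub>R (P t $ l v* X 0)" for l
    using rowsum_ge_one[of t l] by (simp add: P_def scaleR_vector_matrix_assoc)
  have "X t $ i - X t $ j = (Q t $ i v* X 0 - Q t $ j v* X 0) v* V t"
    using representation[of t] by (simp add: row_matrix_matrix_mult vector_matrix_mult_diff_distrib)
  then have "norm (X t $ i - X t $ j) = norm (Q t $ i v* X 0 - Q t $ j v* X 0)"
    by (simp add: norm_vector_matrix_mult_orthogonal[OF V_orthogonal])
  also have "\<dots> \<le> 2 * rowsum t $ i * norm (P t $ i v* X 0 - P t $ j v* X 0)"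
    using rowsum_ge_one[of t i] rowsum_ge_one[of t j]
    by (intro norm_diff_le_if_unit_multiples[OF norm_Q_row norm_Q_row scaled scaled]) auto
  also have "\<dots> \<le> 2 * S * (\<Sum>k\<in>UNIV. \<bar>P t $ i $ k - P t $ j $ k\<bar>)"
    using norm_vector_matrix_mult_le_sum_abs[OF unit_rows_0, of "P t $ i - P t $ j"]
      assms[of i] rowsum_ge_one[of t i]
    by (intro mult_mono) (auto simp: vector_matrix_mult_diff_distrib)
  finally show ?thesis .
qed

lemma P_column_averaging:
  assumes "\<And>t i j. (j, i) \<in> E \<Longrightarrow> \<alpha> \<le> avg_weights t $ i $ j" and "0 \<le> \<alpha>"
  shows "averaging_process (\<lambda>t. column k (P t)) avg_weights E \<alpha>"
  using assms by unfold_locales (simp_all add: avg_weights_row_stochastic P_Suc column_matrix_mult)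

lemma P_entry_diff_le:
  assumes "\<And>t i j. (j, i) \<in> E \<Longrightarrow> \<alpha> \<le> avg_weights t $ i $ j" and "0 \<le> \<alpha>" and "\<alpha> \<le> 1"
    and "\<And>i. (c, i) \<in> E ^^ L" and "0 < L"
  shows "\<bar>P t $ i $ k - P t $ j $ k\<bar> \<le> (1 - \<alpha> ^ L) ^ (t div L)"
proof -
  interpret column: averaging_process "\<lambda>t. column k (P t)" avg_weights E \<alpha>
    using assms(1,2) by (rule P_column_averaging)
  obtain i0 j0 where "spread (column k (P 0)) = P 0 $ i0 $ k - P 0 $ j0 $ k"
    by (metis spread_eq_diff column_def vec_lambda_beta)
  then have "spread (column k (P 0)) \<le> 1"
    using P_bounds[of 0 i0 k] P_bounds[of 0 j0 k] by simp
  have "\<bar>P t $ i $ k - P t $ j $ k\<bar> \<le> spread (column k (P t))"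
    using abs_diff_le_spread[of "column k (P t)" i j] by (simp add: column_def)
  also have "\<dots> \<le> (1 - \<alpha> ^ L) ^ (t div L) * spread (column k (P 0))"
    by (rule column.spread_decay[OF assms(4,5,3)])
  also have "\<dots> \<le> (1 - \<alpha> ^ L) ^ (t div L)"
    using \<open>spread (column k (P 0)) \<le> 1\<close> assms(2,3) by (simp add: mult_left_le power_le_one)
  finally show ?thesis .
qed

lemma mu_decay:
  assumes "\<And>t i j. (j, i) \<in> E \<Longrightarrow> \<alpha>0 \<le> A t $ i $ j" and "0 < \<alpha>0"
    and "\<And>i. (c, i) \<in> E ^^ L" and "0 < L"
  shows "\<exists>K \<alpha>. 0 \<le> K \<and> 0 < \<alpha> \<and> \<alpha> \<le> 1/2 \<and> (\<forall>t. mu (X t) \<le> K * (1 - \<alpha> ^ L) ^ (t div L))"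
proof -
  obtain S where S: "\<And>t i. rowsum t $ i \<le> S"
    using rowsum_bounded by blast
  have "1 \<le> S"
    using rowsum_ge_one S order_trans by blast
  define \<alpha> where "\<alpha> = min (\<alpha>0 / S) (1/2)"
  have "0 < \<alpha>"
    using \<open>0 < \<alpha>0\<close> \<open>1 \<le> S\<close> by (simp add: \<alpha>_def)
  have "\<alpha> \<le> 1/2"
    unfolding \<alpha>_def by (rule min.cobounded2)
  have weights: "\<alpha> \<le> avg_weights t $ i $ j" if "(j, i) \<in> E" for t i j
    using avg_weights_ge[OF assms(1)[OF that] S] unfolding \<alpha>_def by (rule min.coboundedI1)
  have entry: "\<bar>P t $ i $ k - P t $ j $ k\<bar> \<le> (1 - \<alpha> ^ L) ^ (t div L)" for t i j k
    using \<open>0 < \<alpha>\<close> \<open>\<alpha> \<le> 1/2\<close> by (intro P_entry_diff_le[OF weights _ _ assms(3,4)]) auto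
  have "norm (X t $ i - X t $ j) \<le> 2 * S * (real CARD('n) * (1 - \<alpha> ^ L) ^ (t div L))" for t i j
  proof -
    have "(\<Sum>k\<in>UNIV. \<bar>P t $ i $ k - P t $ j $ k\<bar>) \<le> (\<Sum>k\<in>(UNIV::'n set). (1 - \<alpha> ^ L) ^ (t div L))"
      by (intro sum_mono entry)
    then show ?thesis
      using \<open>1 \<le> S\<close> by (intro order_trans[OF row_diff_le[OF S]] mult_left_mono) auto
  qed
  then have "mu (X t) \<le> real CARD('n) * (2 * S * (real CARD('n) * (1 - \<alpha> ^ L) ^ (t div L)))" for t
    by (rule mu_le_if_row_dist_le)
  then show ?thesis
    using \<open>0 < \<alpha>\<close> \<open>\<alpha> \<le> 1/2\<close> \<open>1 \<le> S\<close>
    by (intro exI[of _ "real CARD('n) * (2 * S * real CARD('n))"] exI[of _ \<alpha>]) (simp add: mult_ac)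
qed

end

section \<open>The convergence rate\<close>

lemma power_div_le_powr:
  fixes b :: real
  assumes "0 < b" and "b \<le> 1" and "0 < L"
  shows "b ^ (t div L) \<le> b powr (real t / real L) / b"
proof -
  have "t mod L < L"
    using assms(3) by simp
  then have "t \<le> t div L * L + L"
    using div_mult_mod_eq[of t L] by linarith
  then have "real t \<le> real (t div L) * real L + real L"
    by (metis of_nat_add of_nat_le_iff of_nat_mult)
  then have "real t / real L - 1 \<le> real (t div L)"
    using assms(3) by (simp add: field_simps)
  then have "b powr real (t div L) \<le> b powr (real t / real L - 1)"
    using assms(1,2) by (intro powr_mono') auto
  then show ?thesis
    using assms(1) by (simp add: powr_realpow powr_diff)
qed

lemma mult_power_div_le_power:
  fixes N \<alpha> :: real
  assumes "1 \<le> N" and "1 \<le> r" and "0 \<le> \<alpha>" and "\<alpha> \<le> 1"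
  shows "N * (\<alpha> / N) ^ (2 * r) \<le> \<alpha> ^ r"
proof -
  have "N \<le> N ^ (2 * r)"
    using power_increasing[of 1 "2 * r" N] assms(1,2) by simp
  then have "N * \<alpha> ^ (2 * r) \<le> N ^ (2 * r) * \<alpha> ^ (2 * r)"
    using assms(3) by (intro mult_right_mono) auto
  then have "N * (\<alpha> / N) ^ (2 * r) \<le> \<alpha> ^ (2 * r)"
    using assms(1) by (simp add: power_divide divide_le_eq mult.commute)
  also have "\<dots> \<le> \<alpha> ^ r"
    using assms(3,4) by (intro power_decreasing) auto
  finally show ?thesis .
qed

lemma geometric_decay_imp_powr_decay:
  fixes f :: "nat \<Rightarrow> real" and N \<alpha> K :: real and r :: nat
  assumes "1 \<le> N" and "1 \<le> r" and "0 < \<alpha>" and "\<alpha> \<le> 1/2" and "0 \<le> K"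
    and decay: "\<And>t. f t \<le> K * (1 - \<alpha> ^ r) ^ (t div r)"
  shows "\<exists>C > 0. \<exists>\<epsilon> > 0. N * \<epsilon> < 1 \<and>
           (\<forall>t. f t \<le> C * (1 - N * \<epsilon> ^ (2 * r)) powr (real t / real (2 * r)))"
proof (intro exI conjI allI)
  define b where "b = 1 - \<alpha> ^ r"
  have "\<alpha> ^ r \<le> \<alpha>"
    using power_decreasing[of 1 r \<alpha>] assms(2-4) by simp
  then have b: "1/2 \<le> b" "b \<le> 1"
    using assms(3,4) by (auto simp: b_def)
  \<comment> \<open>the rate is weakened twice: \<alpha>^r becomes N (\<alpha>/N)^(2r), and the exponent t/r is halved\<close>
  have "N * (\<alpha> / N) ^ (2 * r) \<le> \<alpha> ^ r"
    using assms(1-4) by (intro mult_power_div_le_power) auto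
  then have q: "b \<le> 1 - N * (\<alpha> / N) ^ (2 * r)"
    by (simp add: b_def)
  fix t
  have "f t \<le> K * (b powr (real t / real r) / b)"
    using decay[of t] power_div_le_powr[of b r t] b assms(2,5) mult_left_mono[of _ _ K]
    unfolding b_def by fastforce
  also have "b powr (real t / real r) \<le> b powr (real t / real (2 * r))"
    using b assms(2) by (intro powr_mono') (auto simp: frac_le)
  also have "\<dots> \<le> (1 - N * (\<alpha> / N) ^ (2 * r)) powr (real t / real (2 * r))"
    using b q by (intro powr_mono2) auto
  finally have "f t \<le> K / b * (1 - N * (\<alpha> / N) ^ (2 * r)) powr (real t / real (2 * r))"
    using b assms(5) by (simp add: mult_left_mono divide_right_mono)
  also have "\<dots> \<le> max 1 (K / b) * (1 - N * (\<alpha> / N) ^ (2 * r)) powr (real t / real (2 * r))"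
    by (intro mult_right_mono) auto
  finally show "f t \<le> max 1 (K / b) * (1 - N * (\<alpha> / N) ^ (2 * r)) powr (real t / real (2 * r))" .
  show "0 < max 1 (K / b)" "0 < \<alpha> / N" "N * (\<alpha> / N) < 1"
    using assms(1,3,4) by auto
qed

theorem theorem2:
  fixes E :: "('n::finite \<times> 'n) set"
    and dQK :: real
    and WQ WK :: "nat \<Rightarrow> real^'p::finite^'d::finite"
    and WV :: "nat \<Rightarrow> real^'d^'d"
    and X :: "nat \<Rightarrow> real^'d^'n"
    and r :: nat
  assumes dQK_pos: "dQK > 0"
    and dyn: "\<And>t. X (Suc t) = sa_step E dQK (WQ t) (WK t) (WV t) (X t)"
    and sc: "strongly_connected E"
    and rad: "r = graph_radius E"
    and A1: "\<And>i. (i, i) \<in> E"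
    and A2: "\<exists>B. \<forall>t. max (spec_norm (WQ t)) (spec_norm (WK t)) \<le> B"
    and orth: "\<And>t. orthogonal_matrix (WV t)"
    and unit0: "\<And>i. norm (X 0 $ i) = 1"
    and Nd: "CARD('n) \<le> CARD('d)"
    and fullrank: "rank (X 0) = CARD('n)"
  shows "\<exists>C > 0. \<exists>\<epsilon> > 0. real CARD('n) * \<epsilon> < 1 \<and>
           (\<forall>t. mu (X t) \<le> C * (1 - real CARD('n) * \<epsilon> ^ (2 * r)) powr (real t / real (2 * r)))"
proof (cases "CARD('n) = 1")
  case True
  then show ?thesis
    using mu_card_one[OF True, of "X _"] by (intro exI[of _ 1] conjI exI[of _ "1/2"] allI) simp_all
next
  case False
  moreover have "0 < CARD('n)"
    by (simp add: card_gt_0_iff)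
  ultimately have "2 \<le> CARD('n)"
    by linarith
  obtain c where reach: "\<And>v. (c, v) \<in> E ^^ r"
    using strongly_connected_center[OF sc A1] rad by blast
  have "1 \<le> r"
    using graph_radius_ge_one[OF sc A1 \<open>2 \<le> CARD('n)\<close>] rad by simp
  obtain B where B: "\<And>t. spec_norm (WQ t) \<le> B" "\<And>t. spec_norm (WK t) \<le> B"
    using A2 by auto
  interpret flow: layernorm_flow "\<lambda>t. attn E dQK (WQ t) (WK t) (X t)" WV X
    using attn_row_stochastic[OF A1] orth unit0 inj_vector_matrix_mult_if_full_rank[OF fullrank]
    by unfold_locales (simp_all add: dyn sa_step_def)
  obtain K \<alpha> where "0 \<le> K" "0 < \<alpha>" "\<alpha> \<le> 1/2" "\<And>t. mu (X t) \<le> K * (1 - \<alpha> ^ r) ^ (t div r)"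
    using flow.mu_decay[OF attn_ge[OF A1 _ dQK_pos flow.unit_rows B] _ reach] \<open>1 \<le> r\<close> by auto
  then show ?thesis
    using \<open>1 \<le> r\<close> \<open>2 \<le> CARD('n)\<close> by (intro geometric_decay_imp_powr_decay) auto
qed

end
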